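(* Let $S=((x_i,y_i))_{i=1}^n$ with $y_i\in\{\pm1\}$, let $h_1,\dots,h_T:\mathcal X\to[-1,1]$, $H=\frac1T\sum_{t=1}^Th_t$, and $\kappa\in[0,1/2]$. Let $(P^\star,\theta_H)=\mathrm{Pythia}(S,H,\kappa)$. Then \[ \sum_{t=1}^TM(P^\star,h_t)\le\frac T2+\frac{T\theta_H}{2}, \] where $M(P,h)=\mathbb{E}_{i\sim P}\big[1-\tfrac12|h(x_i)-y_i|\big]$.
   Context: Pythia$(S,H,\kappa)$: let $B=\{i\in[n]:y_iH(x_i)<0\}$ and $\theta=0$; sort $[n]\setminus B$ by the margin $y_iH(x_i)$; while $|B|<\kappa n$, add to $B$ an element $i$ of $[n]\setminus B$ of minimum margin and set $\theta$ to $y_iH(x_i)$. Output $P^\star$, the uniform distribution on $B$, and $\theta_H=\theta$. *)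

theory Defs
  imports "HOL-Probability.Probability"
begin

text \<open>Sample S = ((x i, y i)) for i < n (0-indexed); the combined hypothesis
  H = (1/T) * sum of h t for t = 1..T.\<close>
definition Hcomb :: "nat \<Rightarrow> (nat \<Rightarrow> 'x \<Rightarrow> real) \<Rightarrow> 'x \<Rightarrow> real" where
  "Hcomb T h z = (\<Sum>t=1..T. h t z) / real T"

inductive pythia_step ::
  "nat \<Rightarrow> (nat \<Rightarrow> 'x) \<Rightarrow> (nat \<Rightarrow> real) \<Rightarrow> ('x \<Rightarrow> real) \<Rightarrow> real
     \<Rightarrow> nat set \<times> real \<Rightarrow> nat set \<times> real \<Rightarrow> bool"
  for n x y H \<kappa> where
  step: "real (card B) < \<kappa> * real n \<Longrightarrow> i \<in> {..<n} - B \<Longrightarrow>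
         (\<forall>j\<in>{..<n} - B. y i * H (x i) \<le> y j * H (x j)) \<Longrightarrow>
         pythia_step n x y H \<kappa> (B, \<theta>) (insert i B, y i * H (x i))"

text \<open>(B, theta) is a possible output of Pythia(S,H,kappa) (ties in the minimum may be broken
  arbitrarily): start from the misclassified set with theta = 0, run the loop until
  card B >= kappa n. The output distribution is the uniform distribution on B.\<close>
definition pythia ::
  "nat \<Rightarrow> (nat \<Rightarrow> 'x) \<Rightarrow> (nat \<Rightarrow> real) \<Rightarrow> ('x \<Rightarrow> real) \<Rightarrow> real \<Rightarrow> nat set \<Rightarrow> real \<Rightarrow> bool" where
  "pythia n x y H \<kappa> B \<theta> \<longleftrightarrow>
     (pythia_step n x y H \<kappa>)\<^sup>*\<^sup>* ({i \<in> {..<n}. y i * H (x i) < 0}, 0) (B, \<theta>)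
     \<and> \<not> (real (card B) < \<kappa> * real n)"

definition Mfun :: "nat pmf \<Rightarrow> ('x \<Rightarrow> real) \<Rightarrow> (nat \<Rightarrow> 'x) \<Rightarrow> (nat \<Rightarrow> real) \<Rightarrow> real" where
  "Mfun P h x y = measure_pmf.expectation P (\<lambda>i. 1 - \<bar>h (x i) - y i\<bar> / 2)"

end

theory Submission
  imports Defs
begin

text \<open>Throughout its run Pythia maintains a threshold \<theta> separating the margins y i * H (x i)
  inside B from those outside it, so every point in the support of the uniform distribution on B
  has margin at most \<theta>. For labels \<plusminus>1 and predictions in [-1,1] the quantity
  1 - |h(x) - y|/2 equals (1 + y h(x))/2, which is affine in h; summing over t therefore gives
  T/2 + (T/2) E[y H(x)], and the expected margin is at most \<theta>.\<close>

definition threshold_separates ::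
  "nat \<Rightarrow> (nat \<Rightarrow> 'x) \<Rightarrow> (nat \<Rightarrow> real) \<Rightarrow> ('x \<Rightarrow> real) \<Rightarrow> nat set \<Rightarrow> real \<Rightarrow> bool" where
  "threshold_separates n x y H B \<theta> \<longleftrightarrow>
     B \<subseteq> {..<n} \<and> (\<forall>j\<in>B. y j * H (x j) \<le> \<theta>) \<and> (\<forall>j\<in>{..<n} - B. \<theta> \<le> y j * H (x j))"

lemma threshold_separates_misclassified:
  "threshold_separates n x y H {i \<in> {..<n}. y i * H (x i) < 0} 0"
  by (auto simp: threshold_separates_def)

lemma pythia_step_threshold_separates:
  assumes "pythia_step n x y H \<kappa> (B, \<theta>) (B', \<theta>')"
    and "threshold_separates n x y H B \<theta>"
  shows "threshold_separates n x y H B' \<theta>'"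
  using assms(1)
proof cases
  case (step i)
  then have "\<theta> \<le> \<theta>'"
    using assms(2) by (auto simp: threshold_separates_def)
  with step assms(2) show ?thesis
    unfolding threshold_separates_def by (smt (verit) Diff_iff insert_iff insert_subset)
qed

lemma pythia_threshold_separates:
  assumes "pythia n x y H \<kappa> B \<theta>"
  shows "threshold_separates n x y H B \<theta>"
proof -
  have "(pythia_step n x y H \<kappa>)\<^sup>*\<^sup>* ({i \<in> {..<n}. y i * H (x i) < 0}, 0) (B, \<theta>)"
    using assms by (simp add: pythia_def)
  then show ?thesis
  proof (induction rule: rtranclp_induct2)
    case refl
    show ?case by (rule threshold_separates_misclassified)
  next
    case (step B \<theta> B' \<theta>')
    show ?case using step.hyps(2) step.IH by (rule pythia_step_threshold_separates)
  qed
qed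

lemma one_minus_half_abs_diff_sign:
  fixes a b :: real
  assumes "b \<in> {-1, 1}" and "a \<in> {-1..1}"
  shows "1 - \<bar>a - b\<bar> / 2 = (1 + b * a) / 2"
  using assms by auto

lemma Mfun_eq_expectation_margin:
  assumes "\<forall>i\<in>set_pmf P. y i \<in> {-1, 1}" and "\<forall>z. h z \<in> {-1..1}"
  shows "Mfun P h x y = measure_pmf.expectation P (\<lambda>i. (1 + y i * h (x i)) / 2)"
proof -
  have "\<forall>i\<in>set_pmf P. 1 - \<bar>h (x i) - y i\<bar> / 2 = (1 + y i * h (x i)) / 2"
    using assms one_minus_half_abs_diff_sign by blast
  then show ?thesis
    unfolding Mfun_def by (intro integral_cong_AE) (simp_all add: AE_measure_pmf_iff)
qed

lemma of_nat_mult_Hcomb: "real T * Hcomb T h z = (\<Sum>t=1..T. h t z)"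
  by (cases "T = 0") (simp_all add: Hcomb_def)

lemma sum_Mfun_eq_expectation_margin:
  assumes "finite (set_pmf P)" and "\<forall>i\<in>set_pmf P. y i \<in> {-1, 1}"
    and "\<forall>t\<in>{1..T}. \<forall>z. h t z \<in> {-1..1}"
  shows "(\<Sum>t=1..T. Mfun P (h t) x y)
    = real T / 2 + real T / 2 * measure_pmf.expectation P (\<lambda>i. y i * Hcomb T h (x i))"
proof -
  have integrable: "integrable (measure_pmf P) f" for f :: "nat \<Rightarrow> real"
    using assms(1) by (rule integrable_measure_pmf_finite)
  have "(\<Sum>t=1..T. Mfun P (h t) x y)
      = (\<Sum>t=1..T. measure_pmf.expectation P (\<lambda>i. (1 + y i * h t (x i)) / 2))"
    using assms(2,3) by (intro sum.cong) (simp_all add: Mfun_eq_expectation_margin)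
  also have "\<dots> = measure_pmf.expectation P (\<lambda>i. \<Sum>t=1..T. (1 + y i * h t (x i)) / 2)"
    by (simp add: integral_sum integrable)
  also have "\<dots> = measure_pmf.expectation P (\<lambda>i. real T / 2 + real T / 2 * (y i * Hcomb T h (x i)))"
  proof (intro Bochner_Integration.integral_cong refl)
    fix i
    have "(\<Sum>t=1..T. (1 + y i * h t (x i)) / 2) = (real T + y i * (\<Sum>t=1..T. h t (x i))) / 2"
      by (simp add: sum_divide_distrib[symmetric] sum.distrib sum_distrib_left)
    then show "(\<Sum>t=1..T. (1 + y i * h t (x i)) / 2) = real T / 2 + real T / 2 * (y i * Hcomb T h (x i))"
      using of_nat_mult_Hcomb[of T h "x i"] by (simp add: field_simps)
  qed
  also have "\<dots> = real T / 2 + real T / 2 * measure_pmf.expectation P (\<lambda>i. y i * Hcomb T h (x i))"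
    by (simp add: integrable)
  finally show ?thesis .
qed

theorem mainTheorem11:
  fixes n T :: nat and x :: "nat \<Rightarrow> 'x" and y :: "nat \<Rightarrow> real"
    and h :: "nat \<Rightarrow> 'x \<Rightarrow> real" and \<kappa> \<theta> :: real and B :: "nat set"
  assumes "\<forall>i<n. y i \<in> {-1, 1}"
    and "\<forall>t\<in>{1..T}. \<forall>z. h t z \<in> {-1..1}"
    and "T \<ge> 1"
    and "0 \<le> \<kappa>" and "\<kappa> \<le> 1/2"
    and "pythia n x y (Hcomb T h) \<kappa> B \<theta>"
    and "B \<noteq> {}"
  shows "(\<Sum>t=1..T. Mfun (pmf_of_set B) (h t) x y) \<le> real T / 2 + real T * \<theta> / 2"
proof -
  have B: "B \<subseteq> {..<n}" and margins: "\<forall>j\<in>B. y j * Hcomb T h (x j) \<le> \<theta>"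
    using pythia_threshold_separates[OF assms(6)] by (simp_all add: threshold_separates_def)
  have "finite B"
    using B finite_subset by blast
  then have support: "set_pmf (pmf_of_set B) = B" "finite (set_pmf (pmf_of_set B))"
    using assms(7) by simp_all
  have "measure_pmf.expectation (pmf_of_set B) (\<lambda>i. y i * Hcomb T h (x i)) \<le> \<theta>"
    using margins support
    by (intro measure_pmf.integral_le_const integrable_measure_pmf_finite)
      (simp_all add: AE_measure_pmf_iff)
  moreover have "\<forall>i\<in>set_pmf (pmf_of_set B). y i \<in> {-1, 1}"
    using B assms(1) support by auto
  ultimately show ?thesis
    using sum_Mfun_eq_expectation_margin[OF support(2) _ assms(2)]
    by (simp add: mult_left_mono)
qed

end
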